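(* Let $X$ be a real Banach space and let $x, y \in X$ be non-zero. Then the following are equivalent: (i) there exist $\lambda < 0$ and $r > 0$ such that the open ball $B(\lambda x, r) = \{ z \in X : \|\lambda x - z\| < r\}$ contains $y$ but does not contain the zero vector; (ii) $\rho'_{+}(x, y) < 0$.
   Context: For $x, y$ in a real normed space $X$, the norm derivatives are $\rho'_{+}(x,y) = \lim_{t \to 0^+} \|x\| \frac{\|x+ty\| - \|x\|}{t}$ and $\rho'_{-}(x,y) = \lim_{t \to 0^-} \|x\| \frac{\|x+ty\| - \|x\|}{t}$. Balls are open balls. *)

theory Defs
  imports "HOL-Analysis.Analysis"
begin

text \<open>Norm derivative rho'_+(x,y) = lim_{t -> 0+} ||x|| (||x+ty|| - ||x||)/t.
  The limit always exists in a real normed space (convexity of the norm).\<close>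
definition rho_plus :: "'a::real_normed_vector \<Rightarrow> 'a \<Rightarrow> real" where
  "rho_plus x y = Lim (at_right 0) (\<lambda>t. norm x * (norm (x + t *\<^sub>R y) - norm x) / t)"

definition rho_minus :: "'a::real_normed_vector \<Rightarrow> 'a \<Rightarrow> real" where
  "rho_minus x y = Lim (at_left 0) (\<lambda>t. norm x * (norm (x + t *\<^sub>R y) - norm x) / t)"

end

theory Submission
  imports Defs
begin

text \<open>By convexity of the norm, the difference quotient
  (\<parallel>x + t y\<parallel> - \<parallel>x\<parallel>) / t is nondecreasing in t > 0 and bounded below by -\<parallel>y\<parallel>,
  so rho'_+(x, y) is \<parallel>x\<parallel> times its infimum. Hence rho'_+(x, y) < 0 iff
  \<parallel>x + t y\<parallel> < \<parallel>x\<parallel> for some t > 0. Scaling by \<lambda> = -1/t, this says that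
  y lies in the ball around \<lambda> x whose radius is \<parallel>\<lambda> x\<parallel>, the largest radius
  for which the ball misses 0.\<close>

definition norm_diff_quot :: "'a::real_normed_vector \<Rightarrow> 'a \<Rightarrow> real \<Rightarrow> real" where
  "norm_diff_quot x y t = (norm (x + t *\<^sub>R y) - norm x) / t"

lemma norm_diff_quot_mono:
  fixes x y :: "'a::real_normed_vector"
  assumes "0 < s" "s \<le> t"
  shows "norm_diff_quot x y s \<le> norm_diff_quot x y t"
proof -
  have t: "t > 0" using assms by linarith
  have "x + s *\<^sub>R y = (1 - s/t) *\<^sub>R x + (s/t) *\<^sub>R (x + t *\<^sub>R y)"
    using t by (simp add: algebra_simps)
  then have "norm (x + s *\<^sub>R y) \<le> norm ((1 - s/t) *\<^sub>R x) + norm ((s/t) *\<^sub>R (x + t *\<^sub>R y))"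
    by (metis norm_triangle_ineq)
  also have "\<dots> = (1 - s/t) * norm x + (s/t) * norm (x + t *\<^sub>R y)"
    using assms t by simp
  finally have "norm (x + s *\<^sub>R y) - norm x \<le> (s/t) * (norm (x + t *\<^sub>R y) - norm x)"
    by (simp add: algebra_simps)
  then have "(norm (x + s *\<^sub>R y) - norm x) / s \<le> ((s/t) * (norm (x + t *\<^sub>R y) - norm x)) / s"
    using assms by (intro divide_right_mono) simp_all
  also have "\<dots> = (norm (x + t *\<^sub>R y) - norm x) / t"
    using assms t by simp
  finally show ?thesis
    unfolding norm_diff_quot_def .
qed

lemma norm_diff_quot_ge:
  fixes x y :: "'a::real_normed_vector"
  assumes "0 < t"
  shows "- norm y \<le> norm_diff_quot x y t"
proof -
  have "norm x \<le> norm (x + t *\<^sub>R y) + norm (t *\<^sub>R y)"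
    by (metis add_diff_cancel_right' norm_triangle_ineq4)
  then have "- (t * norm y) \<le> norm (x + t *\<^sub>R y) - norm x"
    using assms by simp
  then show ?thesis
    using assms by (simp add: norm_diff_quot_def divide_simps mult.commute)
qed

lemma tendsto_norm_diff_quot:
  fixes x y :: "'a::real_normed_vector"
  shows "(norm_diff_quot x y \<longlongrightarrow> Inf (norm_diff_quot x y ` {0<..})) (at_right 0)"
  using Lim_right_bound[of UNIV 0 "norm_diff_quot x y" "- norm y"]
  by (simp add: norm_diff_quot_mono norm_diff_quot_ge)

lemma rho_plus_eq_Inf_norm_diff_quot:
  fixes x y :: "'a::real_normed_vector"
  shows "rho_plus x y = norm x * Inf (norm_diff_quot x y ` {0<..})"
proof -
  have "((\<lambda>t. norm x * (norm (x + t *\<^sub>R y) - norm x) / t) \<longlongrightarrow>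
          norm x * Inf (norm_diff_quot x y ` {0<..})) (at_right 0)"
    using tendsto_mult[OF tendsto_const tendsto_norm_diff_quot, of "norm x" x y]
    by (simp add: norm_diff_quot_def times_divide_eq_right)
  then show ?thesis
    unfolding rho_plus_def by (intro tendsto_Lim) simp_all
qed

lemma rho_plus_neg_iff:
  fixes x y :: "'a::real_normed_vector"
  assumes "x \<noteq> 0"
  shows "rho_plus x y < 0 \<longleftrightarrow> (\<exists>t>0. norm (x + t *\<^sub>R y) < norm x)"
proof -
  have bdd: "bdd_below (norm_diff_quot x y ` {0<..})"
    by (rule bdd_belowI[where m = "- norm y"]) (auto intro: norm_diff_quot_ge)
  have "rho_plus x y < 0 \<longleftrightarrow> Inf (norm_diff_quot x y ` {0<..}) < 0"
    using assms by (simp add: rho_plus_eq_Inf_norm_diff_quot mult_less_0_iff)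
  also have "\<dots> \<longleftrightarrow> (\<exists>t>0. norm_diff_quot x y t < 0)"
    using cInf_less_iff[OF _ bdd, of 0] by auto
  also have "\<dots> \<longleftrightarrow> (\<exists>t>0. norm (x + t *\<^sub>R y) < norm x)"
    by (auto simp: norm_diff_quot_def divide_less_0_iff)
  finally show ?thesis .
qed

lemma ball_through_avoiding_origin_iff:
  fixes x y :: "'a::real_normed_vector"
  shows "(\<exists>l r. l < 0 \<and> r > 0 \<and> y \<in> ball (l *\<^sub>R x) r \<and> 0 \<notin> ball (l *\<^sub>R x) r)
         \<longleftrightarrow> (\<exists>t>0. norm (x + t *\<^sub>R y) < norm x)"
proof
  assume "\<exists>t>0. norm (x + t *\<^sub>R y) < norm x"
  then obtain t where t: "t > 0" "norm (x + t *\<^sub>R y) < norm x"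
    by blast
  define l where "l = - 1 / t"
  have "l < 0"
    using t by (simp add: l_def)
  have "l *\<^sub>R x - y = l *\<^sub>R (x + t *\<^sub>R y)"
    using t by (simp add: l_def scaleR_add_right)
  then have "norm (l *\<^sub>R x - y) = norm (x + t *\<^sub>R y) / t"
    using t by (simp add: l_def)
  also have "\<dots> < norm x / t"
    using t by (simp add: divide_strict_right_mono)
  also have "\<dots> = norm (l *\<^sub>R x)"
    using t by (simp add: l_def)
  finally have closer: "norm (l *\<^sub>R x - y) < norm (l *\<^sub>R x)" .
  then have "y \<in> ball (l *\<^sub>R x) (norm (l *\<^sub>R x))" "0 \<notin> ball (l *\<^sub>R x) (norm (l *\<^sub>R x))"
    by (simp_all add: dist_norm)
  moreover have "norm (l *\<^sub>R x) > 0"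
    using closer norm_ge_zero[of "l *\<^sub>R x - y"] by linarith
  ultimately show "\<exists>l r. l < 0 \<and> r > 0 \<and> y \<in> ball (l *\<^sub>R x) r \<and> 0 \<notin> ball (l *\<^sub>R x) r"
    using \<open>l < 0\<close> by blast
next
  assume "\<exists>l r. l < 0 \<and> r > 0 \<and> y \<in> ball (l *\<^sub>R x) r \<and> 0 \<notin> ball (l *\<^sub>R x) r"
  then obtain l r where lr: "l < 0" "norm (l *\<^sub>R x - y) < r" "r \<le> norm (l *\<^sub>R x)"
    by (auto simp: dist_norm)
  define t where "t = - 1 / l"
  have t: "t > 0"
    using lr by (simp add: t_def)
  have "norm (x + t *\<^sub>R y) = norm (t *\<^sub>R (y - l *\<^sub>R x))"
    using lr by (simp add: t_def algebra_simps)
  also have "\<dots> = t * norm (l *\<^sub>R x - y)"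
    using t by (simp add: norm_minus_commute)
  also have "\<dots> < t * norm (l *\<^sub>R x)"
    using t lr by (intro mult_strict_left_mono) auto
  also have "\<dots> = norm x"
    using lr by (simp add: t_def)
  finally show "\<exists>t>0. norm (x + t *\<^sub>R y) < norm x"
    using t by blast
qed

theorem mainTheorem2:
  fixes x y :: "'a::banach"
  assumes "x \<noteq> 0" and "y \<noteq> 0"
  shows "(\<exists>l::real. \<exists>r::real. l < 0 \<and> r > 0 \<and>
            y \<in> ball (l *\<^sub>R x) r \<and> 0 \<notin> ball (l *\<^sub>R x) r)
         \<longleftrightarrow> rho_plus x y < 0"
  using ball_through_avoiding_origin_iff[where x = x and y = y] rho_plus_neg_iff[OF assms(1)]
  by simp

end
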